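(* Let $T>0$ and let $f:\Omega\times[0,T]\times\mathbb{R}\times\mathbb{R}^d\to\mathbb{R}$ satisfy: for every $(y,z)$, $f(\cdot,y,z)\in L^2_{\mathcal{F}}(0,T)$, and there is $\mu>0$ with $|f(t,y,z)-f(t,\bar y,\bar z)|\le\mu(|y-\bar y|+|z-\bar z|)$ for all $y,\bar y\in\mathbb{R}$, $z,\bar z\in\mathbb{R}^d$. For $(t,y,z)\in[0,T]\times\mathbb{R}\times\mathbb{R}^d$ let $(Y^{t,y,z}_s)_{s\in[t,T]}$ be the solution of $Y^{t,y,z}_s=y-\int_t^s f(r,Y^{t,y,z}_r,z)\,dr+z\cdot(B_s-B_t)$, $s\in[t,T]$. Suppose that for each $(t,y,z)\in[0,T]\times\mathbb{R}\times\mathbb{R}^d$, $f(\omega,r,Y^{t,y,z}_r,z)\ge 0$ (resp. $=0$) for $dr\times dP$-a.e. $(r,\omega)\in[t,T]\times\Omega$. Then for each $(y,z)\in\mathbb{R}\times\mathbb{R}^d$, $f(\omega,t,y,z)\ge0$ (resp. $=0$) for $dt\times dP$-a.e. $(t,\omega)\in[0,T]\times\Omega$.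
   Context: Let $(\Omega,\mathcal{F},P)$ be a probability space carrying a $d$-dimensional Brownian motion $(B_t)_{t\ge0}$, and let $\mathcal{F}_t=\sigma\{B_s, s\le t\}$ be its natural filtration. $L^2_{\mathcal{F}}(0,T)$ denotes the space of $(\mathcal{F}_t)$-adapted real processes $\phi$ with $E\int_0^T|\phi_s|^2ds<\infty$. *)

theory Defs
  imports "HOL-Probability.Probability"
begin

definition brownian_motion :: "'a measure \<Rightarrow> (real \<Rightarrow> 'a \<Rightarrow> real^'d::finite) \<Rightarrow> bool" where
  "brownian_motion M B \<longleftrightarrow>
     prob_space M \<and>
     (\<forall>t\<ge>0. B t \<in> borel_measurable M) \<and>
     (\<forall>\<omega>\<in>space M. B 0 \<omega> = 0 \<and> continuous_on {0..} (\<lambda>t. B t \<omega>)) \<and>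
     (\<forall>s t. 0 \<le> s \<and> s < t \<longrightarrow>
        distr M borel (\<lambda>\<omega>. B t \<omega> - B s \<omega>) =
        density lborel (\<lambda>x. ennreal (\<Prod>i\<in>UNIV. normal_density 0 (sqrt (t - s)) (x $ i)))) \<and>
     (\<forall>(n::nat) ts. 0 \<le> ts 0 \<and> (\<forall>i<n. ts i < ts (Suc i)) \<longrightarrow>
        prob_space.indep_vars M (\<lambda>_. borel) (\<lambda>i \<omega>. B (ts (Suc i)) \<omega> - B (ts i) \<omega>) {..<n})"

definition nat_filt :: "'a measure \<Rightarrow> (real \<Rightarrow> 'a \<Rightarrow> real^'d::finite) \<Rightarrow> real \<Rightarrow> 'a measure" where
  "nat_filt M B t = sigma (space M)
     {B r -` A \<inter> space M | r A. 0 \<le> r \<and> r \<le> t \<and> A \<in> sets borel}"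

definition L2F :: "'a measure \<Rightarrow> (real \<Rightarrow> 'a \<Rightarrow> real^'d::finite) \<Rightarrow> real \<Rightarrow> (real \<Rightarrow> 'a \<Rightarrow> real) \<Rightarrow> bool" where
  "L2F M B T \<phi> \<longleftrightarrow>
     (\<lambda>(t,\<omega>). \<phi> t \<omega>) \<in> borel_measurable (restrict_space lborel {0..T} \<Otimes>\<^sub>M M) \<and>
     (\<forall>t\<in>{0..T}. \<phi> t \<in> borel_measurable (nat_filt M B t)) \<and>
     integrable (restrict_space lborel {0..T} \<Otimes>\<^sub>M M) (\<lambda>(t,\<omega>). (\<phi> t \<omega>)\<^sup>2)"

definition is_solution ::
  "'a measure \<Rightarrow> (real \<Rightarrow> 'a \<Rightarrow> real^'d::finite) \<Rightarrow> ('a \<Rightarrow> real \<Rightarrow> real \<Rightarrow> real^'d \<Rightarrow> real)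
    \<Rightarrow> real \<Rightarrow> real \<Rightarrow> real \<Rightarrow> real^'d \<Rightarrow> (real \<Rightarrow> 'a \<Rightarrow> real) \<Rightarrow> bool" where
  "is_solution M B f T t y z Y \<longleftrightarrow>
     (AE \<omega> in M. set_integrable lborel {t..T} (\<lambda>r. f \<omega> r (Y r \<omega>) z) \<and>
        (\<forall>s\<in>{t..T}. Y s \<omega> = y - (LINT r:{t..s}|lborel. f \<omega> r (Y r \<omega>) z) + z \<bullet> (B s \<omega> - B t \<omega>)))"

end

theory Submission
  imports Defs
begin

text \<open>
  Fix \<open>y\<close>, \<open>z\<close>, a path \<open>\<omega>\<close> and a time \<open>r\<close>, and write \<open>Y\<^sub>t\<close> for the solution
  started at \<open>(t, y, z)\<close>. By the Lipschitz bound, and since \<open>Y\<^sub>0\<close> is bounded, the drift of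
  \<open>Y\<^sub>t\<close> is dominated by the integrable drift of \<open>Y\<^sub>0\<close> plus a constant plus \<open>\<mu>\<close> times the
  deviation \<open>|Y\<^sub>t - y|\<close>; on an interval \<open>[t, r]\<close> with \<open>\<mu> (r - t) \<le> 1/2\<close> that deviation
  is absorbed, and the noise \<open>z \<bullet> (B\<^sub>s - B\<^sub>t)\<close> is small by continuity of the path. Hence
  \<open>Y\<^sub>t(r) \<rightarrow> y\<close> as \<open>t \<rightarrow> r\<^sup>-\<close> along the rationals. Since the hypothesis holds almost surely
  for all countably many rational \<open>t\<close> at once, for a.e. \<open>(r, \<omega>)\<close> the value \<open>f(r, y, z)\<close> is
  a limit of values \<open>f(r, Y\<^sub>t(r), z)\<close> in the closed set \<open>[0, \<infinity>)\<close> (resp. \<open>{0}\<close>).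
\<close>

lemma deviation_le_of_absorbable_drift:
  fixes h g n Yt :: "real \<Rightarrow> real"
  assumes "t \<le> r" and "\<mu> \<ge> 0" and small: "\<mu> * (r - t) \<le> 1/2"
    and h: "h integrable_on {t..r}" "(\<lambda>u. \<bar>h u\<bar>) integrable_on {t..r}"
    and g: "g integrable_on {t..r}"
    and eq: "\<And>s. s \<in> {t..r} \<Longrightarrow> Yt s = y - integral {t..s} h + n s"
    and h_le: "\<And>u. u \<in> {t..r} \<Longrightarrow> \<bar>h u\<bar> \<le> g u + \<mu> * \<bar>Yt u - y\<bar>"
    and n_le: "\<And>s. s \<in> {t..r} \<Longrightarrow> \<bar>n s\<bar> \<le> \<beta>"
  shows "\<bar>Yt r - y\<bar> \<le> 2 * (integral {t..r} g + \<beta>)"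
proof -
  define D where "D s = \<bar>Yt s - y\<bar>" for s
  have D_le: "D s \<le> integral {t..r} (\<lambda>u. \<bar>h u\<bar>) + \<beta>" if s: "s \<in> {t..r}" for s
  proof -
    have "norm (integral {t..s} h) \<le> integral {t..s} (\<lambda>u. \<bar>h u\<bar>)"
      using s h by (intro integral_norm_bound_integral) (auto intro: integrable_on_subinterval)
    also have "\<dots> \<le> integral {t..r} (\<lambda>u. \<bar>h u\<bar>)"
      using s h by (intro integral_subset_le) (auto intro: integrable_on_subinterval)
    finally show ?thesis
      using eq[OF s] n_le[OF s] unfolding D_def real_norm_def by linarith
  qed
  define MD where "MD = Sup (D ` {t..r})"
  have bdd: "bdd_above (D ` {t..r})"
    using D_le by (intro bdd_aboveI2)
  have D_MD: "D s \<le> MD" if "s \<in> {t..r}" for s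
    unfolding MD_def using bdd that by (intro cSup_upper) auto
  have "MD \<ge> 0"
    using D_MD[of r] \<open>t \<le> r\<close> unfolding D_def by force
  have "integral {t..r} (\<lambda>u. \<bar>h u\<bar>) \<le> integral {t..r} (\<lambda>u. g u + \<mu> * MD)"
    using h g h_le D_MD \<open>\<mu> \<ge> 0\<close> unfolding D_def
    by (intro integral_le) (auto intro!: integrable_add order.trans[OF h_le] mult_left_mono)
  also have "\<dots> = integral {t..r} g + \<mu> * (r - t) * MD"
    using g \<open>t \<le> r\<close> by (subst integral_add) (auto simp: algebra_simps)
  also have "\<dots> \<le> integral {t..r} g + MD / 2"
    using small \<open>MD \<ge> 0\<close> mult_right_mono[OF small \<open>MD \<ge> 0\<close>] by simp
  finally have "MD \<le> integral {t..r} g + MD / 2 + \<beta>"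
    unfolding MD_def using D_le \<open>t \<le> r\<close> by (intro cSup_least) force+
  then show ?thesis
    using D_MD[of r] \<open>t \<le> r\<close> unfolding D_def by simp
qed

lemma eventually_at_left_forall_Icc:
  fixes r :: real
  assumes "eventually P (at_left r)" and "P r"
  shows "eventually (\<lambda>t. \<forall>s\<in>{t..r}. P s) (at_left r)"
proof -
  obtain c where "c < r" "\<forall>s>c. s < r \<longrightarrow> P s"
    using assms(1) unfolding eventually_at_left_field by blast
  then show ?thesis
    using assms(2) unfolding eventually_at_left_field
    by (intro exI[of _ c]) (auto simp: order.order_iff_strict)
qed

lemma eventually_at_left_noise_small:
  fixes b :: "real \<Rightarrow> 'v::real_inner"
  assumes b: "continuous_on {a..r} b" and "a < r" and "\<epsilon> > 0"
  shows "\<forall>\<^sub>F t in at_left r. \<forall>s\<in>{t..r}. \<bar>z \<bullet> (b s - b t)\<bar> \<le> \<epsilon>"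
proof -
  have "(b \<longlongrightarrow> b r) (at_left r)"
    using b \<open>a < r\<close> by (rule continuous_on_Icc_at_leftD)
  then have "((\<lambda>s. norm z * norm (b s - b r)) \<longlongrightarrow> 0) (at_left r)"
    by (intro tendsto_mult_right_zero tendsto_norm_zero LIM_zero)
  then have "\<forall>\<^sub>F s in at_left r. norm z * norm (b s - b r) \<le> \<epsilon>/2"
    using \<open>\<epsilon> > 0\<close> by (intro order_tendstoD(2)[of _ _ _ "\<epsilon>/2", THEN eventually_mono]) auto
  then have "\<forall>\<^sub>F t in at_left r. \<forall>s\<in>{t..r}. norm z * norm (b s - b r) \<le> \<epsilon>/2"
    using \<open>\<epsilon> > 0\<close> by (intro eventually_at_left_forall_Icc) auto
  then show ?thesis
  proof (rule eventually_mono, intro ballI)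
    fix t s
    assume close: "\<forall>s\<in>{t..r}. norm z * norm (b s - b r) \<le> \<epsilon>/2" and s: "s \<in> {t..r}"
    have "\<bar>z \<bullet> (b s - b t)\<bar> \<le> norm z * norm ((b s - b r) - (b t - b r))"
      using Cauchy_Schwarz_ineq2 by simp
    also have "\<dots> \<le> norm z * norm (b s - b r) + norm z * norm (b t - b r)"
      by (metis distrib_left mult_left_mono norm_ge_zero norm_triangle_ineq4)
    also have "\<dots> \<le> \<epsilon>"
      using close[rule_format, of s] close[rule_format, of t] s by auto
    finally show "\<bar>z \<bullet> (b s - b t)\<bar> \<le> \<epsilon>" .
  qed
qed

lemma continuous_on_integral_equation_solution:
  fixes b :: "real \<Rightarrow> 'v::real_inner" and h Yp :: "real \<Rightarrow> real"
  assumes "continuous_on {a..c} b" and "h integrable_on {a..c}"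
    and "\<And>s. s \<in> {a..c} \<Longrightarrow> Yp s = y - integral {a..s} h + z \<bullet> (b s - b a)"
  shows "continuous_on {a..c} Yp"
proof -
  have "continuous_on {a..c} (\<lambda>s. y - integral {a..s} h + z \<bullet> (b s - b a))"
    using assms(1,2) by (intro continuous_intros indefinite_integral_continuous_1) auto
  then show ?thesis
    by (rule continuous_on_eq) (use assms(3) in auto)
qed

lemma exists_start_with_small_deviation_of_dominated_drift:
  fixes b :: "real \<Rightarrow> 'v::real_inner" and g :: "real \<Rightarrow> real" and h Yp :: "real \<Rightarrow> real \<Rightarrow> real"
  assumes "\<mu> \<ge> 0" and r: "r \<in> {0<..T}" and "\<epsilon> > 0"
    and Q: "Q \<subseteq> {0..T}" "\<And>c. c < r \<Longrightarrow> \<exists>t\<in>Q. c < t \<and> t < r"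
    and b: "continuous_on {0..T} b"
    and h: "\<And>t. t \<in> Q \<Longrightarrow> t \<le> r \<Longrightarrow> h t integrable_on {t..r}"
      "\<And>t. t \<in> Q \<Longrightarrow> t \<le> r \<Longrightarrow> (\<lambda>u. \<bar>h t u\<bar>) integrable_on {t..r}"
    and eq: "\<And>t s. t \<in> Q \<Longrightarrow> s \<in> {t..r} \<Longrightarrow> Yp t s = y - integral {t..s} (h t) + z \<bullet> (b s - b t)"
    and g: "g integrable_on {0..r}"
    and h_le: "\<And>t u. t \<in> Q \<Longrightarrow> u \<in> {t..r} \<Longrightarrow> \<bar>h t u\<bar> \<le> g u + \<mu> * \<bar>Yp t u - y\<bar>"
  shows "\<exists>t\<in>Q. t \<le> r \<and> \<bar>Yp t r - y\<bar> \<le> \<epsilon>"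
proof -
  have "((\<lambda>t. \<mu> * (r - t)) \<longlongrightarrow> 0) (at_left r)"
    by (intro tendsto_eq_intros) auto
  then have ev_absorb: "\<forall>\<^sub>F t in at_left r. \<mu> * (r - t) \<le> 1/2"
    by (rule order_tendstoD(2)[of _ 0 _ "1/2", THEN eventually_mono]) auto
  have "continuous_on {0..r} (\<lambda>t. integral {t..r} g)"
    using g by (rule indefinite_integral_continuous_1')
  then have "((\<lambda>t. integral {t..r} g) \<longlongrightarrow> 0) (at_left r)"
    using continuous_on_Icc_at_leftD r by fastforce
  then have ev_drift: "\<forall>\<^sub>F t in at_left r. integral {t..r} g \<le> \<epsilon>/4"
    using \<open>\<epsilon> > 0\<close> by (intro order_tendstoD(2)[of _ _ _ "\<epsilon>/4", THEN eventually_mono]) auto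
  have ev_noise: "\<forall>\<^sub>F t in at_left r. \<forall>s\<in>{t..r}. \<bar>z \<bullet> (b s - b t)\<bar> \<le> \<epsilon>/4"
    using r \<open>\<epsilon> > 0\<close> by (intro eventually_at_left_noise_small[of 0] continuous_on_subset[OF b]) auto
  obtain c where "c < r" and c: "\<And>t. c < t \<Longrightarrow> t < r \<Longrightarrow> \<mu> * (r - t) \<le> 1/2 \<and>
      integral {t..r} g \<le> \<epsilon>/4 \<and> (\<forall>s\<in>{t..r}. \<bar>z \<bullet> (b s - b t)\<bar> \<le> \<epsilon>/4)"
    using eventually_conj[OF ev_absorb eventually_conj[OF ev_drift ev_noise]]
    unfolding eventually_at_left_field by blast
  obtain t where t: "t \<in> Q" "c < t" "t < r"
    using Q(2)[OF \<open>c < r\<close>] by blast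
  have "g integrable_on {t..r}"
    using t Q(1) by (intro integrable_on_subinterval[OF g]) auto
  then have "\<bar>Yp t r - y\<bar> \<le> 2 * (integral {t..r} g + \<epsilon>/4)"
    by (intro deviation_le_of_absorbable_drift[where \<mu>=\<mu> and h="h t" and n="\<lambda>s. z \<bullet> (b s - b t)"])
      (use t c[OF t(2,3)] \<open>\<mu> \<ge> 0\<close> h eq h_le in auto)
  then show ?thesis
    using t c[OF t(2,3)] by (intro bexI[of _ t]) auto
qed

lemma exists_start_with_small_deviation:
  fixes b :: "real \<Rightarrow> 'v::real_inner" and h Yp :: "real \<Rightarrow> real \<Rightarrow> real"
  assumes "\<mu> \<ge> 0" and r: "r \<in> {0<..T}" and "\<epsilon> > 0"
    and Q: "Q \<subseteq> {0..T}" "0 \<in> Q" "\<And>c. c < r \<Longrightarrow> \<exists>t\<in>Q. c < t \<and> t < r"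
    and b: "continuous_on {0..T} b"
    and h: "\<And>t. t \<in> Q \<Longrightarrow> set_integrable lborel {t..T} (h t)"
    and eq: "\<And>t s. t \<in> Q \<Longrightarrow> s \<in> {t..T} \<Longrightarrow>
               Yp t s = y - (LINT u:{t..s}|lborel. h t u) + z \<bullet> (b s - b t)"
    and lip: "\<And>t u. t \<in> Q \<Longrightarrow> u \<in> {t..T} \<Longrightarrow> \<bar>h t u - h 0 u\<bar> \<le> \<mu> * \<bar>Yp t u - Yp 0 u\<bar>"
  shows "\<exists>t\<in>Q. t \<le> r \<and> \<bar>Yp t r - y\<bar> \<le> \<epsilon>"
proof -
  have h_int: "h t integrable_on {t..s}" "(\<lambda>u. \<bar>h t u\<bar>) integrable_on {t..s}"
    and eq': "Yp t s = y - integral {t..s} (h t) + z \<bullet> (b s - b t)"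
    if "t \<in> Q" "t \<le> s" "s \<le> T" for t s
  proof -
    have hs: "set_integrable lborel {t..s} (h t)"
      using that by (intro set_integrable_subset[OF h[OF that(1)]]) auto
    then show "h t integrable_on {t..s}" "(\<lambda>u. \<bar>h t u\<bar>) integrable_on {t..s}"
      and "Yp t s = y - integral {t..s} (h t) + z \<bullet> (b s - b t)"
      using set_borel_integral_eq_integral[OF hs] set_borel_integral_eq_integral(1)[OF set_integrable_abs[OF hs]]
        eq[of t s] that by auto
  qed
  have "continuous_on {0..T} (Yp 0)"
    using b h_int(1)[OF Q(2), of T] eq'[OF Q(2)] r by (intro continuous_on_integral_equation_solution) auto
  then have "bounded ((\<lambda>s. Yp 0 s - y) ` {0..T})"
    by (intro compact_imp_bounded compact_continuous_image continuous_intros) auto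
  then obtain C where C: "\<And>s. s \<in> {0..T} \<Longrightarrow> \<bar>Yp 0 s - y\<bar> \<le> C"
    unfolding bounded_iff by (metis image_eqI real_norm_def)
  show ?thesis
  proof (rule exists_start_with_small_deviation_of_dominated_drift
      [where g="\<lambda>u. \<bar>h 0 u\<bar> + \<mu> * C", OF \<open>\<mu> \<ge> 0\<close> r \<open>\<epsilon> > 0\<close> Q(1,3) b])
    show "(\<lambda>u. \<bar>h 0 u\<bar> + \<mu> * C) integrable_on {0..r}"
      using r by (intro integrable_add h_int(2)[OF Q(2)]) auto
    show "\<bar>h t u\<bar> \<le> \<bar>h 0 u\<bar> + \<mu> * C + \<mu> * \<bar>Yp t u - y\<bar>" if "t \<in> Q" "u \<in> {t..r}" for t u
    proof -
      have "\<bar>h t u\<bar> \<le> \<bar>h 0 u\<bar> + \<mu> * \<bar>Yp t u - Yp 0 u\<bar>"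
        using lip[of t u] that r by auto
      also have "\<dots> \<le> \<bar>h 0 u\<bar> + \<mu> * (\<bar>Yp t u - y\<bar> + C)"
        using C[of u] Q(1) that r \<open>\<mu> \<ge> 0\<close> by (intro add_left_mono mult_left_mono) auto
      finally show ?thesis
        by (simp add: algebra_simps)
    qed
  qed (use r Q(1) h_int eq' in auto)
qed

text \<open>Unlike \<open>AE_commute\<close>, this needs no measurability of \<open>P\<close>: nothing is assumed about the
  joint measurability of the solutions \<open>Y\<close>.\<close>
lemma (in pair_sigma_finite) AE_pair_swap:
  assumes "AE p in M1 \<Otimes>\<^sub>M M2. P p"
  shows "AE y in M2. AE x in M1. P (x, y)"
proof -
  interpret swapped: pair_sigma_finite M2 M1 ..
  have "AE p in distr (M2 \<Otimes>\<^sub>M M1) (M1 \<Otimes>\<^sub>M M2) (\<lambda>(x, y). (y, x)). P p"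
    using assms by (subst (asm) distr_pair_swap)
  then have "AE p in M2 \<Otimes>\<^sub>M M1. P (snd p, fst p)"
    by (auto dest: AE_distrD[OF measurable_pair_swap'] simp: case_prod_beta)
  then show ?thesis
    by (auto dest: swapped.AE_pair)
qed

lemma pair_sigma_finite_restrict_lborel:
  assumes "sigma_finite_measure M" and "A \<in> sets borel"
  shows "pair_sigma_finite (restrict_space lborel A) M"
  using assms sigma_finite_measure_restrict_space[OF lborel.sigma_finite_measure_axioms]
  by (auto simp: pair_sigma_finite_def)

lemma AE_restrict_lborel_pair_of_AE_AE:
  fixes M :: "'a measure" and a b :: real
  assumes "sigma_finite_measure M"
    and meas: "{p \<in> space (restrict_space lborel {a..b} \<Otimes>\<^sub>M M). P (fst p) (snd p)}
                 \<in> sets (restrict_space lborel {a..b} \<Otimes>\<^sub>M M)"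
    and ae: "AE \<omega> in M. AE r in lborel. r \<in> {a<..b} \<longrightarrow> P r \<omega>"
  shows "AE p in restrict_space lborel {a..b} \<Otimes>\<^sub>M M. P (fst p) (snd p)"
proof -
  interpret pair_sigma_finite "restrict_space lborel {a..b}" M
    using assms(1) by (rule pair_sigma_finite_restrict_lborel) auto
  have "AE \<omega> in M. AE r in restrict_space lborel {a..b}. P r \<omega>"
    using ae
  proof eventually_elim
    case (elim \<omega>)
    have "AE r in lborel. r \<noteq> a"
      by (intro AE_not_in[of "{a}", simplified]) auto
    with elim have "AE r in lborel. r \<in> {a..b} \<longrightarrow> P r \<omega>"
      by eventually_elim auto
    then show ?case
      by (subst AE_restrict_space_iff) auto
  qed
  then show ?thesis
    using AE_commute[OF meas] AE_pair_iff[OF meas] by simp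
qed

lemma in_closed_of_solutions_from_rational_starts:
  fixes b :: "real \<Rightarrow> 'v::real_inner" and \<phi> Yp :: "real \<Rightarrow> real \<Rightarrow> real"
  assumes "\<mu> \<ge> 0" and r: "r \<in> {0<..T}" and "closed S"
    and b: "continuous_on {0..T} b"
    and lip: "\<And>u v w. u \<in> {0..T} \<Longrightarrow> \<bar>\<phi> u v - \<phi> u w\<bar> \<le> \<mu> * \<bar>v - w\<bar>"
    and sol: "\<And>t. t \<in> {0..T} \<inter> \<rat> \<Longrightarrow> set_integrable lborel {t..T} (\<lambda>u. \<phi> u (Yp t u)) \<and>
               (\<forall>s\<in>{t..T}. Yp t s = y - (LINT u:{t..s}|lborel. \<phi> u (Yp t u)) + z \<bullet> (b s - b t))"
    and in_S: "\<And>t. t \<in> {0..T} \<inter> \<rat> \<Longrightarrow> t \<le> r \<Longrightarrow> \<phi> r (Yp t r) \<in> S"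
  shows "\<phi> r y \<in> S"
proof -
  define Q where "Q = {0..T} \<inter> \<rat>"
  have Q: "Q \<subseteq> {0..T}" "0 \<in> Q"
    using r unfolding Q_def by auto
  have Q_dense: "\<exists>t\<in>Q. c < t \<and> t < r" if "c < r" for c
    using r that Rats_dense_in_real[of "max 0 c" r] unfolding Q_def by auto
  have "\<exists>v\<in>S. dist v (\<phi> r y) < \<epsilon>" if "\<epsilon> > 0" for \<epsilon>
  proof -
    have "\<exists>t\<in>Q. t \<le> r \<and> \<bar>Yp t r - y\<bar> \<le> \<epsilon> / (\<mu> + 1)"
    proof (rule exists_start_with_small_deviation[where h="\<lambda>t u. \<phi> u (Yp t u)",
          OF \<open>\<mu> \<ge> 0\<close> r _ Q Q_dense b])
      show "\<epsilon> / (\<mu> + 1) > 0"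
        using that \<open>\<mu> \<ge> 0\<close> by simp
      show "\<bar>\<phi> u (Yp t u) - \<phi> u (Yp 0 u)\<bar> \<le> \<mu> * \<bar>Yp t u - Yp 0 u\<bar>" if "t \<in> Q" "u \<in> {t..T}" for t u
        using lip that Q(1) by auto
    qed (use sol in \<open>auto simp: Q_def\<close>)
    then obtain t where t: "t \<in> Q" "t \<le> r" and close: "\<bar>Yp t r - y\<bar> \<le> \<epsilon> / (\<mu> + 1)"
      by blast
    have "\<bar>\<phi> r y - \<phi> r (Yp t r)\<bar> \<le> \<mu> * \<bar>Yp t r - y\<bar>"
      using lip[of r y "Yp t r"] r by (simp add: abs_minus_commute)
    also have "\<dots> \<le> \<mu> * (\<epsilon> / (\<mu> + 1))"
      using close \<open>\<mu> \<ge> 0\<close> by (rule mult_left_mono)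
    also have "\<dots> < \<epsilon>"
      using \<open>\<mu> \<ge> 0\<close> that by (simp add: field_simps)
    finally show ?thesis
      using in_S t unfolding Q_def by (intro bexI[of _ "\<phi> r (Yp t r)"]) (auto simp: dist_real_def)
  qed
  then show ?thesis
    using closed_approachable[OF \<open>closed S\<close>] by blast
qed

lemma AE_pathwise_in_closed_of_AE_along_solutions:
  fixes M :: "'a measure" and B :: "real \<Rightarrow> 'a \<Rightarrow> real^'d::finite"
    and f :: "'a \<Rightarrow> real \<Rightarrow> real \<Rightarrow> real^'d \<Rightarrow> real" and Y :: "real \<Rightarrow> real \<Rightarrow> 'a \<Rightarrow> real"
  assumes "sigma_finite_measure M"
    and cont: "AE \<omega> in M. continuous_on {0..T} (\<lambda>s. B s \<omega>)"
    and "\<mu> \<ge> 0"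
    and Lip: "\<And>\<omega> r y1 y2. \<omega> \<in> space M \<Longrightarrow> r \<in> {0..T} \<Longrightarrow>
               \<bar>f \<omega> r y1 z - f \<omega> r y2 z\<bar> \<le> \<mu> * \<bar>y1 - y2\<bar>"
    and sol: "\<And>t. t \<in> {0..T} \<Longrightarrow> is_solution M B f T t y z (Y t)"
    and "closed S"
    and hyp: "\<And>t. t \<in> {0..T} \<Longrightarrow>
               AE p in restrict_space lborel {t..T} \<Otimes>\<^sub>M M. f (snd p) (fst p) (Y t (fst p) (snd p)) z \<in> S"
  shows "AE \<omega> in M. AE r in lborel. r \<in> {0<..T} \<longrightarrow> f \<omega> r y z \<in> S"
proof -
  define Q where "Q = {0..T} \<inter> \<rat>"
  have "countable Q"
    unfolding Q_def by (rule countable_subset[OF _ countable_rat]) auto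
  have sol_Q: "AE \<omega> in M. \<forall>t\<in>Q. set_integrable lborel {t..T} (\<lambda>r. f \<omega> r (Y t r \<omega>) z) \<and>
        (\<forall>s\<in>{t..T}. Y t s \<omega> = y - (LINT r:{t..s}|lborel. f \<omega> r (Y t r \<omega>) z) + z \<bullet> (B s \<omega> - B t \<omega>))"
    using sol unfolding is_solution_def Q_def
    by (subst AE_ball_countable[OF \<open>countable Q\<close>[unfolded Q_def]]) auto
  have hyp_Q: "AE \<omega> in M. \<forall>t\<in>Q. AE r in lborel. r \<in> {t..T} \<longrightarrow> f \<omega> r (Y t r \<omega>) z \<in> S"
  proof (subst AE_ball_countable[OF \<open>countable Q\<close>], intro ballI)
    fix t assume "t \<in> Q"
    then have t: "t \<in> {0..T}"
      unfolding Q_def by auto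
    interpret pair_sigma_finite "restrict_space lborel {t..T}" M
      using assms(1) by (rule pair_sigma_finite_restrict_lborel) auto
    have "AE \<omega> in M. AE r in restrict_space lborel {t..T}. f \<omega> r (Y t r \<omega>) z \<in> S"
      using AE_pair_swap[OF hyp[OF t]] by simp
    then show "AE \<omega> in M. AE r in lborel. r \<in> {t..T} \<longrightarrow> f \<omega> r (Y t r \<omega>) z \<in> S"
      by (subst (asm) AE_restrict_space_iff) auto
  qed
  from sol_Q hyp_Q cont AE_space show ?thesis
  proof eventually_elim
    case (elim \<omega>)
    have "AE r in lborel. \<forall>t\<in>Q. r \<in> {t..T} \<longrightarrow> f \<omega> r (Y t r \<omega>) z \<in> S"
      using elim(2) by (subst AE_ball_countable[OF \<open>countable Q\<close>])
    then show ?case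
    proof (rule AE_mp[OF _ AE_I2], intro impI)
      fix r
      assume "\<forall>t\<in>Q. r \<in> {t..T} \<longrightarrow> f \<omega> r (Y t r \<omega>) z \<in> S" and r: "r \<in> {0<..T}"
      then show "f \<omega> r y z \<in> S"
        using in_closed_of_solutions_from_rational_starts[where \<phi>="\<lambda>u v. f \<omega> u v z"
            and Yp="\<lambda>t s. Y t s \<omega>", OF \<open>\<mu> \<ge> 0\<close> r \<open>closed S\<close> elim(3) Lip[OF elim(4)]]
          elim(1) unfolding Q_def by auto
    qed
  qed
qed

lemma AE_in_closed_of_AE_along_solutions:
  fixes M :: "'a measure" and B :: "real \<Rightarrow> 'a \<Rightarrow> real^'d::finite"
    and f :: "'a \<Rightarrow> real \<Rightarrow> real \<Rightarrow> real^'d \<Rightarrow> real" and Y :: "real \<Rightarrow> real \<Rightarrow> 'a \<Rightarrow> real"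
  assumes "sigma_finite_measure M"
    and "AE \<omega> in M. continuous_on {0..T} (\<lambda>s. B s \<omega>)"
    and "\<mu> \<ge> 0"
    and "\<And>\<omega> r y1 y2. \<omega> \<in> space M \<Longrightarrow> r \<in> {0..T} \<Longrightarrow>
           \<bar>f \<omega> r y1 z - f \<omega> r y2 z\<bar> \<le> \<mu> * \<bar>y1 - y2\<bar>"
    and "\<And>t. t \<in> {0..T} \<Longrightarrow> is_solution M B f T t y z (Y t)"
    and "closed S"
    and meas: "(\<lambda>p. f (snd p) (fst p) y z) \<in> borel_measurable (restrict_space lborel {0..T} \<Otimes>\<^sub>M M)"
    and "\<And>t. t \<in> {0..T} \<Longrightarrow>
           AE p in restrict_space lborel {t..T} \<Otimes>\<^sub>M M. f (snd p) (fst p) (Y t (fst p) (snd p)) z \<in> S"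
  shows "AE p in restrict_space lborel {0..T} \<Otimes>\<^sub>M M. f (snd p) (fst p) y z \<in> S"
proof (rule AE_restrict_lborel_pair_of_AE_AE[where P="\<lambda>r \<omega>. f \<omega> r y z \<in> S"])
  show "{p \<in> space (restrict_space lborel {0..T} \<Otimes>\<^sub>M M). f (snd p) (fst p) y z \<in> S}
          \<in> sets (restrict_space lborel {0..T} \<Otimes>\<^sub>M M)"
    using measurable_sets[OF meas, of S] \<open>closed S\<close> by (simp add: vimage_def Int_def conj_commute)
next
  show "AE \<omega> in M. AE r in lborel. r \<in> {0<..T} \<longrightarrow> f \<omega> r y z \<in> S"
    by (rule AE_pathwise_in_closed_of_AE_along_solutions[OF assms(1-6) assms(8)])
qed (rule assms(1))

theorem lemma4p4:
  fixes M :: "'a measure" and B :: "real \<Rightarrow> 'a \<Rightarrow> real^'d::finite"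
    and f :: "'a \<Rightarrow> real \<Rightarrow> real \<Rightarrow> real^'d \<Rightarrow> real"
    and Y :: "real \<Rightarrow> real \<Rightarrow> real^'d \<Rightarrow> real \<Rightarrow> 'a \<Rightarrow> real"
    and T \<mu> :: real
  assumes BM: "brownian_motion M B"
    and T: "T > 0"
    and L2: "\<And>y z. L2F M B T (\<lambda>t \<omega>. f \<omega> t y z)"
    and mu: "\<mu> > 0"
    and Lip: "\<And>\<omega> t y y' z z'. \<omega> \<in> space M \<Longrightarrow> t \<in> {0..T} \<Longrightarrow>
               \<bar>f \<omega> t y z - f \<omega> t y' z'\<bar> \<le> \<mu> * (\<bar>y - y'\<bar> + norm (z - z'))"
    and sol: "\<And>t y z. t \<in> {0..T} \<Longrightarrow> is_solution M B f T t y z (Y t y z)"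
  shows "((\<forall>t\<in>{0..T}. \<forall>y z. AE p in (restrict_space lborel {t..T} \<Otimes>\<^sub>M M).
              f (snd p) (fst p) (Y t y z (fst p) (snd p)) z \<ge> 0)
         \<longrightarrow> (\<forall>y z. AE p in (restrict_space lborel {0..T} \<Otimes>\<^sub>M M). f (snd p) (fst p) y z \<ge> 0)) \<and>
         ((\<forall>t\<in>{0..T}. \<forall>y z. AE p in (restrict_space lborel {t..T} \<Otimes>\<^sub>M M).
              f (snd p) (fst p) (Y t y z (fst p) (snd p)) z = 0)
         \<longrightarrow> (\<forall>y z. AE p in (restrict_space lborel {0..T} \<Otimes>\<^sub>M M). f (snd p) (fst p) y z = 0))"
proof -
  have "prob_space M" and paths: "\<And>\<omega>. \<omega> \<in> space M \<Longrightarrow> continuous_on {0..} (\<lambda>t. B t \<omega>)"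
    using BM unfolding brownian_motion_def by auto
  then have "sigma_finite_measure M"
    by (simp add: prob_space_imp_sigma_finite)
  have cont: "AE \<omega> in M. continuous_on {0..T} (\<lambda>s. B s \<omega>)"
    by (intro AE_I2 continuous_on_subset[OF paths]) auto
  have Lip_y: "\<bar>f \<omega> r y1 z - f \<omega> r y2 z\<bar> \<le> \<mu> * \<bar>y1 - y2\<bar>"
    if "\<omega> \<in> space M" "r \<in> {0..T}" for \<omega> r y1 y2 z
    using Lip[OF that, where y=y1 and y'=y2 and z=z and z'=z] by simp
  have meas: "(\<lambda>p. f (snd p) (fst p) y z) \<in> borel_measurable (restrict_space lborel {0..T} \<Otimes>\<^sub>M M)" for y z
    using L2[of y z] unfolding L2F_def by (simp add: case_prod_beta')
  have closed_inv: "AE p in restrict_space lborel {0..T} \<Otimes>\<^sub>M M. f (snd p) (fst p) y z \<in> S"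
    if "closed S" and "\<forall>t\<in>{0..T}. \<forall>y z. AE p in restrict_space lborel {t..T} \<Otimes>\<^sub>M M.
                         f (snd p) (fst p) (Y t y z (fst p) (snd p)) z \<in> S" for S y z
    using AE_in_closed_of_AE_along_solutions[where Y="\<lambda>t. Y t y z",
        OF \<open>sigma_finite_measure M\<close> cont _ Lip_y sol \<open>closed S\<close> meas] mu that(2) by auto
  show ?thesis
    using closed_inv[of "{0..}"] closed_inv[of "{0}"] by auto
qed

end
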